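(* For $a\in\mathcal{A}'$ write $\overline{a}=a+\mathrm{II}\in\mathcal{A}'/\mathrm{II}$. Then for all $a\in\mathcal{A}'$, all $i,j\in\{1,\dots,n\}$ and every rational function $\phi(t)$ with $\phi(H)\in\mathcal{A}'$: \begin{align*} \overline{a}\diamond\overline{\partial_j}&=\overline{a\partial_j}, & \overline{x^i}\diamond\overline{a}&=\overline{x^ia},\\ \overline{\partial_i}\diamond\overline{\gamma^j}&=\overline{\partial_i\gamma^j-\varphi_1(H-1)\gamma_i\partial^j}, & \overline{\gamma^i}\diamond\overline{\gamma^j}&=\overline{\gamma^i\gamma^j-2\varphi_1(H)x^i\partial^j},\\ \overline{\partial_i}\diamond\overline{x^j}&=\overline{\partial_ix^j-\tfrac{\varphi_1(H-1)}{2}\gamma_i\gamma^j+\varphi_2(H-1)x_i\partial^j}, & \overline{\gamma^i}\diamond\overline{x^j}&=\overline{\gamma^ix^j-\varphi_1(H)x^i\gamma^j},\\ \overline{\phi(H)}\diamond\overline{a}&=\overline{\phi(H)a}, & \overline{a}\diamond\overline{\phi(H)}&=\overline{a\phi(H)}. \end{align*}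
   Context: Fix $n\ge1$ and an invertible complex matrix $\eta=(\eta^{ij})$ with $\eta^{ij}=\eta^{ji}$ and inverse $(\eta_{ij})$. $\mathcal{A}=W(2n|n)$ is the associative superalgebra generated by even $x^1,\dots,x^n,\partial_1,\dots,\partial_n$ and odd $\gamma^1,\dots,\gamma^n$ with relations $x^ix^j=x^jx^i$, $\partial_i\partial_j=\partial_j\partial_i$, $\partial_ix^j-x^j\partial_i=\delta_i^j$, $\gamma^i$ commuting with all $x^j,\partial_j$, $\gamma^i\gamma^j+\gamma^j\gamma^i=2\eta^{ij}$. Repeated indices are summed; $x_i=\eta_{ij}x^j$, $\partial^i=\eta^{ij}\partial_j$, $\gamma_i=\eta_{ij}\gamma^j$. Set $X=\frac{\sqrt{-1}}{\sqrt2}\gamma^i\partial_i$, $Y=\frac{\sqrt{-1}}{\sqrt2}\gamma^ix_i$, $H=-\frac12(\partial_ix^i+x^i\partial_i)$, $E=-\frac12\partial^i\partial_i$, $F=\frac12x^ix_i$. Let $\mathcal{A}'$ be the localization of $\mathcal{A}$ at the multiplicative set generated by $\{H+k:k\in\mathbb{Z}\}$, and $\mathrm{II}:=Y\mathcal{A}'+F\mathcal{A}'+\mathcal{A}'X+\mathcal{A}'E$. Define $\kappa_k(t)=-k/2$ for $k$ even and $\kappa_k(t)=t+\frac{k+1}{2}$ for $k$ odd, and $\varphi_n(t)=\prod_{k=1}^n\frac{(-1)^k}{\kappa_k(t)}$ (so $\varphi_0=1$, $\varphi_1(t)=-\frac1{t+1}$, $\varphi_2(t)=\frac1{t+1}$).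 The diamond product on $\mathcal{A}'/\mathrm{II}$ is $\overline a\diamond\overline b:=\sum_{k\ge0}a\,\varphi_k(H)Y^kX^k\,b+\mathrm{II}$, where all but finitely many summands lie in $\mathrm{II}$ (as $X$ acts locally nilpotently). *)

theory Defs
  imports Complex_Main
begin

text \<open>
  Data of a (candidate) realisation of the localised Weyl--Clifford superalgebra
  A' = W(2n|n) localised at the multiplicative set generated by the H+k.
  Indices run over 0..n-1 (shift of the paper's 1..n).
  xv i = x^i, dv i = d_i (partial), gv i = gamma^i, sc = the complex scalars,
  hinv k = (H+k)^(-1).
\<close>

record 'a WC =
  dim  :: nat
  eta  :: "nat \<Rightarrow> nat \<Rightarrow> complex"
  etai :: "nat \<Rightarrow> nat \<Rightarrow> complex"   (* eta_{ij}, the inverse matrix *)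
  xv   :: "nat \<Rightarrow> 'a"
  dv   :: "nat \<Rightarrow> 'a"
  gv   :: "nat \<Rightarrow> 'a"
  sc   :: "complex \<Rightarrow> 'a"
  hinv :: "int \<Rightarrow> 'a"

context
  fixes W :: "('a::ring_1, 'b) WC_scheme"
begin

definition xlow :: "nat \<Rightarrow> 'a" where
  "xlow i = (\<Sum>j<dim W. sc W (etai W i j) * xv W j)"

definition glow :: "nat \<Rightarrow> 'a" where
  "glow i = (\<Sum>j<dim W. sc W (etai W i j) * gv W j)"

definition dup :: "nat \<Rightarrow> 'a" where
  "dup i = (\<Sum>j<dim W. sc W (eta W i j) * dv W j)"

definition Xop :: 'a where
  "Xop = sc W (\<i> / complex_of_real (sqrt 2)) * (\<Sum>i<dim W. gv W i * dv W i)"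

definition Yop :: 'a where
  "Yop = sc W (\<i> / complex_of_real (sqrt 2)) * (\<Sum>i<dim W. gv W i * xlow i)"

definition Hop :: 'a where
  "Hop = sc W (- 1/2) * (\<Sum>i<dim W. dv W i * xv W i + xv W i * dv W i)"

definition Eop :: 'a where
  "Eop = sc W (- 1/2) * (\<Sum>i<dim W. dup i * dv W i)"

definition Fop :: 'a where
  "Fop = sc W (1/2) * (\<Sum>i<dim W. xv W i * xlow i)"

text \<open>W realises the defining relations of A' (a complex algebra: sc is a ring
  homomorphism from the complex numbers into the centre).\<close>
definition WC_alg :: bool where
  "WC_alg \<longleftrightarrow>
     (\<forall>a b. sc W (a + b) = sc W a + sc W b) \<and>
     (\<forall>a b. sc W (a * b) = sc W a * sc W b) \<and>
     sc W 1 = 1 \<and>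
     (\<forall>c r. sc W c * r = r * sc W c) \<and>
     (\<forall>i<dim W. \<forall>j<dim W.
        xv W i * xv W j = xv W j * xv W i \<and>
        dv W i * dv W j = dv W j * dv W i \<and>
        dv W i * xv W j - xv W j * dv W i = (if i = j then 1 else 0) \<and>
        gv W i * xv W j = xv W j * gv W i \<and>
        gv W i * dv W j = dv W j * gv W i \<and>
        gv W i * gv W j + gv W j * gv W i = sc W (2 * eta W i j)) \<and>
     (\<forall>k::int. (Hop + of_int k) * hinv W k = 1 \<and> hinv W k * (Hop + of_int k) = 1)"

text \<open>The subalgebra generated by the generators and the inverses (H+k)^(-1),
  i.e. the image of A'.\<close>
inductive_set Agen :: "'a set" where
  gen_x: "i < dim W \<Longrightarrow> xv W i \<in> Agen"
| gen_d: "i < dim W \<Longrightarrow> dv W i \<in> Agen"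
| gen_g: "i < dim W \<Longrightarrow> gv W i \<in> Agen"
| gen_sc: "sc W c \<in> Agen"
| gen_hinv: "hinv W k \<in> Agen"
| gen_add: "a \<in> Agen \<Longrightarrow> b \<in> Agen \<Longrightarrow> a + b \<in> Agen"
| gen_mult: "a \<in> Agen \<Longrightarrow> b \<in> Agen \<Longrightarrow> a * b \<in> Agen"

text \<open>Elements phi(H) of A' with phi a rational function: the subalgebra generated
  by the scalars, H and the (H+k)^(-1), k integer.\<close>
inductive_set HRat :: "'a set" where
  hr_sc: "sc W c \<in> HRat"
| hr_H: "Hop \<in> HRat"
| hr_hinv: "hinv W k \<in> HRat"
| hr_add: "a \<in> HRat \<Longrightarrow> b \<in> HRat \<Longrightarrow> a + b \<in> HRat"
| hr_mult: "a \<in> HRat \<Longrightarrow> b \<in> HRat \<Longrightarrow> a * b \<in> HRat"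

definition II :: "'a set" where
  "II = {Yop * r1 + Fop * r2 + r3 * Xop + r4 * Eop | r1 r2 r3 r4.
           r1 \<in> Agen \<and> r2 \<in> Agen \<and> r3 \<in> Agen \<and> r4 \<in> Agen}"

text \<open>kinv m s = kappa_m(H+s)^(-1).\<close>
definition kinv :: "nat \<Rightarrow> int \<Rightarrow> 'a" where
  "kinv m s = (if even m then sc W (- 2 / of_nat m) else hinv W (int ((m + 1) div 2) + s))"

text \<open>phiH k s = varphi_k(H+s).\<close>
fun phiH :: "nat \<Rightarrow> int \<Rightarrow> 'a" where
  "phiH 0 s = 1"
| "phiH (Suc k) s = phiH k s * sc W ((-1) ^ Suc k) * kinv (Suc k) s"

definition dsummand :: "'a \<Rightarrow> 'a \<Rightarrow> nat \<Rightarrow> 'a" where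
  "dsummand a b k = a * phiH k 0 * Yop ^ k * Xop ^ k * b"

text \<open>(a + II) diamond (b + II) = c + II: all but finitely many summands lie in II
  and the (finite) sum of the remaining ones is congruent to c modulo II.\<close>
definition diamond_eq :: "'a \<Rightarrow> 'a \<Rightarrow> 'a \<Rightarrow> bool" where
  "diamond_eq a b c \<longleftrightarrow>
     (\<exists>N. (\<forall>k\<ge>N. dsummand a b k \<in> II) \<and> (\<Sum>k<N. dsummand a b k) - c \<in> II)"

end

end

theory Submission
  imports Defs
begin

(* Commutation with H grades the localised algebra: x^i and Y have weight 1, d_i and X
   weight -1, gamma^i and every phi(H) weight 0, and an element u of weight m satisfies
   u phi(H) = phi(H + m) u. For a of weight m the k-th summand of a diamond b is therefore
   phi_k(H + m) (a Y^k) (X^k b). Reduce a Y^k to a residue q_k modulo the right ideal Y A', and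
   X^k b to a residue t_k modulo the left ideal A' X; as phi(H) Y = Y psi(H), the summand is
   congruent to phi_k(H + m) q_k t_k modulo II. For the generators the residues follow from the
   (anti)commutation relations of X and Y with x^j, d_j and gamma^j, and they vanish from k = 2 on
   (k = 3 for d_i and x^j), so each diamond product is the finite sum of these terms. When a
   commutes past Y, or X past b, only the term k = 0, namely a b, survives. *)

definition commutator :: "'a::ring \<Rightarrow> 'a \<Rightarrow> 'a" where
  "commutator a b = a * b - b * a"

lemma commutator_mult_right: "commutator a (b * c) = commutator a b * c + b * commutator a c"
  by (simp add: commutator_def algebra_simps)

lemma commutator_add_right: "commutator a (b + c) = commutator a b + commutator a c"
  by (simp add: commutator_def algebra_simps)

lemma commutator_sum_right: "commutator a (\<Sum>l\<in>A. f l) = (\<Sum>l\<in>A. commutator a (f l))"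
  by (simp add: commutator_def sum_distrib_left sum_distrib_right sum_subtractf)

lemma commutator_mult_left: "commutator (a * b) c = a * commutator b c + commutator a c * b"
  by (simp add: commutator_def algebra_simps)

lemma commutator_antisym: "commutator a b = - commutator b a"
  by (simp add: commutator_def)

lemma commutator_eq_0_iff: "commutator a b = 0 \<longleftrightarrow> a * b = b * a"
  by (simp add: commutator_def)

lemma commutator_add_left: "commutator (a + b) c = commutator a c + commutator b c"
  by (simp add: commutator_def algebra_simps)

(* A constant rather than an abbreviation, so that simp does not normalise the coefficient of X
   and Y into a quotient. *)
definition i_sqrt_half :: complex where
  "i_sqrt_half = \<i> / complex_of_real (sqrt 2)"

lemma i_sqrt_half_squared: "i_sqrt_half * i_sqrt_half = - (1/2)"
proof -
  have "complex_of_real (sqrt 2) * complex_of_real (sqrt 2) = 2"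
    by (simp flip: of_real_mult)
  then show ?thesis by (simp add: i_sqrt_half_def field_simps)
qed

lemma i_sqrt_half_products:
  "i_sqrt_half * (2 * i_sqrt_half) = - 1" "2 * i_sqrt_half * i_sqrt_half = - 1"
  "2 * i_sqrt_half * (2 * i_sqrt_half) = - 2"
proof -
  have "i_sqrt_half * (2 * i_sqrt_half) = 2 * (i_sqrt_half * i_sqrt_half)"
    by (rule mult.left_commute)
  then show "i_sqrt_half * (2 * i_sqrt_half) = - 1" "2 * i_sqrt_half * i_sqrt_half = - 1"
    "2 * i_sqrt_half * (2 * i_sqrt_half) = - 2"
    by (simp_all add: i_sqrt_half_squared mult.assoc)
qed

lemma symmetric_inverse_symmetric:
  fixes e f :: "nat \<Rightarrow> nat \<Rightarrow> 'a::comm_ring_1"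
  assumes e_sym: "\<forall>i<n. \<forall>j<n. e i j = e j i"
    and inv: "\<forall>i<n. \<forall>k<n. (\<Sum>j<n. e i j * f j k) = (if i = k then 1 else 0)"
    and "i < n" "l < n"
  shows "f i l = f l i"
proof -
  have "(\<Sum>j<n. \<Sum>k<n. f j i * e j k * f k l) = (\<Sum>j<n. if j = l then f j i else 0)"
    using inv \<open>l < n\<close> by (intro sum.cong) (simp_all add: mult.assoc flip: sum_distrib_left)
  also have "\<dots> = f l i"
    using \<open>l < n\<close> by simp
  finally have left: "(\<Sum>j<n. \<Sum>k<n. f j i * e j k * f k l) = f l i" .
  have "(\<Sum>k<n. \<Sum>j<n. f j i * e j k * f k l) = (\<Sum>k<n. if k = i then f k l else 0)"
  proof (intro sum.cong refl)
    fix k assume "k \<in> {..<n}"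
    then have "(\<Sum>j<n. f j i * e j k) = (\<Sum>j<n. e k j * f j i)"
      using e_sym by (intro sum.cong) (simp_all add: mult.commute)
    also have "\<dots> = (if k = i then 1 else 0)"
      using inv \<open>k \<in> {..<n}\<close> \<open>i < n\<close> by simp
    finally have "(\<Sum>j<n. f j i * e j k) = (if k = i then 1 else 0)" .
    then show "(\<Sum>j<n. f j i * e j k * f k l) = (if k = i then f k l else 0)"
      by (simp flip: sum_distrib_right)
  qed
  also have "\<dots> = f i l"
    using \<open>i < n\<close> by simp
  finally show ?thesis
    using left sum.swap[of "\<lambda>j k. f j i * e j k * f k l" "{..<n}" "{..<n}"] by simp
qed

locale weyl_clifford =
  fixes W :: "('a::ring_1, 'b) WC_scheme"
  assumes eta_sym: "\<forall>i<dim W. \<forall>j<dim W. eta W i j = eta W j i"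
    and eta_inv: "\<forall>i<dim W. \<forall>k<dim W. (\<Sum>j<dim W. eta W i j * etai W j k) = (if i = k then 1 else 0)"
    and alg: "WC_alg W"
begin

abbreviation "n \<equiv> dim W"
abbreviation "H \<equiv> Hop W"
abbreviation "X \<equiv> Xop W"
abbreviation "Y \<equiv> Yop W"

lemma Xop_eq: "X = sc W i_sqrt_half * (\<Sum>i<n. gv W i * dv W i)"
  by (simp add: Xop_def i_sqrt_half_def)

lemma Yop_eq: "Y = sc W i_sqrt_half * (\<Sum>i<n. gv W i * xlow W i)"
  by (simp add: Yop_def i_sqrt_half_def)

lemma sc_add: "sc W (\<alpha> + \<beta>) = sc W \<alpha> + sc W \<beta>"
  and sc_mult: "sc W (\<alpha> * \<beta>) = sc W \<alpha> * sc W \<beta>"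
  and sc_1: "sc W 1 = 1"
  and sc_commute: "sc W \<alpha> * u = u * sc W \<alpha>"
  using alg unfolding WC_alg_def by (elim conjE; blast)+

lemma sc_0: "sc W 0 = 0"
  using sc_add[of 0 0] by simp

lemma sc_minus: "sc W (- \<alpha>) = - sc W \<alpha>"
  using sc_add[of \<alpha> "- \<alpha>"] by (simp add: sc_0 eq_neg_iff_add_eq_0 add.commute)

lemma sc_sum: "sc W (\<Sum>l\<in>A. f l) = (\<Sum>l\<in>A. sc W (f l))"
  by (induction A rule: infinite_finite_induct) (simp_all add: sc_0 sc_add)

lemma sc_of_nat: "sc W (of_nat m) = of_nat m"
  by (induction m) (simp_all add: sc_0 sc_add sc_1)

lemma sc_of_int: "sc W (of_int k) = of_int k"
proof (cases k rule: int_cases)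
  case (neg m)
  then show ?thesis
    using sc_of_nat[of "Suc m"] by (simp add: sc_minus del: of_nat_Suc)
qed (simp add: sc_of_nat)

lemma sc_left_commute: "u * (sc W \<alpha> * v) = sc W \<alpha> * (u * v)"
  by (metis mult.assoc sc_commute[of \<alpha> u])

lemma mult_sc_mult_sc: "u * (sc W \<alpha> * v) * (sc W \<beta> * w) = sc W (\<alpha> * \<beta>) * u * v * w"
proof -
  have "u * (sc W \<alpha> * v) * (sc W \<beta> * w) = sc W \<alpha> * (u * v * (sc W \<beta> * w))"
    by (simp only: sc_left_commute[of u \<alpha> v] mult.assoc[of "sc W \<alpha>"])
  also have "\<dots> = sc W \<alpha> * (sc W \<beta> * (u * v * w))"
    by (simp only: sc_left_commute[of "u * v" \<beta> w])
  finally show ?thesis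
    by (simp only: sc_mult mult.assoc)
qed

lemma sc_sc_mult: "sc W \<alpha> * (sc W \<beta> * u) = sc W (\<alpha> * \<beta>) * u"
  by (simp add: sc_mult mult.assoc)

lemma sc_half_double: "sc W (- (1/2)) * (u + u) = - u"
proof -
  have "sc W (- (1/2)) * (u + u) = sc W (- (1/2) + - (1/2)) * u"
    by (simp only: sc_add distrib_left distrib_right)
  then show ?thesis by (simp add: sc_minus sc_1)
qed

lemma commutator_sc_right: "commutator u (sc W \<alpha> * v) = sc W \<alpha> * commutator u v"
  by (simp add: commutator_def sc_left_commute right_diff_distrib mult.assoc)

lemma
  assumes "i < n" "j < n"
  shows x_commute: "xv W i * xv W j = xv W j * xv W i"
    and d_commute: "dv W i * dv W j = dv W j * dv W i"
    and commutator_d_x: "commutator (dv W i) (xv W j) = (if i = j then 1 else 0)"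
    and g_x_commute: "gv W i * xv W j = xv W j * gv W i"
    and g_d_commute: "gv W i * dv W j = dv W j * gv W i"
    and g_anticommute: "gv W i * gv W j = sc W (2 * eta W i j) - gv W j * gv W i"
proof -
  have "\<forall>i<n. \<forall>j<n.
        xv W i * xv W j = xv W j * xv W i \<and>
        dv W i * dv W j = dv W j * dv W i \<and>
        dv W i * xv W j - xv W j * dv W i = (if i = j then 1 else 0) \<and>
        gv W i * xv W j = xv W j * gv W i \<and>
        gv W i * dv W j = dv W j * gv W i \<and>
        gv W i * gv W j + gv W j * gv W i = sc W (2 * eta W i j)"
    using alg unfolding WC_alg_def by (elim conjE) assumption
  note relations = this[rule_format, OF assms]
  show "xv W i * xv W j = xv W j * xv W i" "dv W i * dv W j = dv W j * dv W i"
    "gv W i * xv W j = xv W j * gv W i" "gv W i * dv W j = dv W j * gv W i"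
    using relations by blast+
  show "commutator (dv W i) (xv W j) = (if i = j then 1 else 0)"
    using relations by (simp only: commutator_def)
  show "gv W i * gv W j = sc W (2 * eta W i j) - gv W j * gv W i"
    using relations by (simp only: eq_diff_eq)
qed

lemma etai_sym: "i < n \<Longrightarrow> l < n \<Longrightarrow> etai W i l = etai W l i"
  using symmetric_inverse_symmetric[OF eta_sym eta_inv] .

lemma sum_eta_xlow: assumes i: "i < n" shows "(\<Sum>l<n. sc W (eta W i l) * xlow W l) = xv W i"
proof -
  have "(\<Sum>l<n. sc W (eta W i l) * xlow W l) = (\<Sum>l<n. \<Sum>m<n. sc W (eta W i l * etai W l m) * xv W m)"
    by (simp add: xlow_def sum_distrib_left sc_mult mult.assoc)
  also have "\<dots> = (\<Sum>m<n. \<Sum>l<n. sc W (eta W i l * etai W l m) * xv W m)"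
    by (rule sum.swap)
  also have "\<dots> = (\<Sum>m<n. sc W (\<Sum>l<n. eta W i l * etai W l m) * xv W m)"
    by (simp add: sc_sum sum_distrib_right)
  also have "\<dots> = (\<Sum>m<n. if m = i then xv W m else 0)"
    using eta_inv i by (intro sum.cong) (auto simp: sc_0 sc_1)
  also have "\<dots> = xv W i"
    using i by simp
  finally show ?thesis .
qed

lemma H_hinv: "(H + of_int k) * hinv W k = 1" and hinv_H: "hinv W k * (H + of_int k) = 1"
proof -
  have "\<forall>k::int. (H + of_int k) * hinv W k = 1 \<and> hinv W k * (H + of_int k) = 1"
    using alg unfolding WC_alg_def by (elim conjE) assumption
  then show "(H + of_int k) * hinv W k = 1" "hinv W k * (H + of_int k) = 1"
    by blast+
qed

lemma intertwine_hinv: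
  assumes "u * (H + of_int k) = (H + of_int k') * u"
  shows "u * hinv W k = hinv W k' * u"
proof -
  have "u * hinv W k = hinv W k' * (H + of_int k') * u * hinv W k"
    by (simp only: hinv_H mult_1_left)
  also have "\<dots> = hinv W k' * (u * (H + of_int k)) * hinv W k"
    by (simp only: assms mult.assoc)
  also have "\<dots> = hinv W k' * u"
    by (simp only: mult.assoc H_hinv mult_1_right)
  finally show ?thesis .
qed

section \<open>The grading by H\<close>

definition weight :: "'a \<Rightarrow> int \<Rightarrow> bool" where
  "weight u m \<longleftrightarrow> commutator u H = of_int m * u"

lemma weight_mult_H: "weight u m \<Longrightarrow> u * H = (H + of_int m) * u"
  by (simp add: weight_def commutator_def algebra_simps)

lemma weight_0: "weight 0 m"
  by (simp add: weight_def commutator_def)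

lemma weight_add: "weight u m \<Longrightarrow> weight v m \<Longrightarrow> weight (u + v) m"
  by (simp add: weight_def commutator_add_left distrib_left)

lemma weight_mult:
  assumes "weight u m" "weight v m'"
  shows "weight (u * v) (m + m')"
proof -
  have "u * (of_int m' * v) = of_int m' * (u * v)"
    by (metis mult.assoc mult_of_int_commute)
  then show ?thesis
    using assms by (simp add: weight_def commutator_mult_left algebra_simps)
qed

lemma weight_sum: "(\<And>l. l \<in> A \<Longrightarrow> weight (f l) m) \<Longrightarrow> weight (\<Sum>l\<in>A. f l) m"
  by (induction A rule: infinite_finite_induct) (simp_all add: weight_0 weight_add)

lemma weight_sc: "weight (sc W \<alpha>) 0"
  by (simp add: weight_def commutator_def sc_commute)

lemma weight_sc_mult: "weight u m \<Longrightarrow> weight (sc W \<alpha> * u) m"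
  using weight_mult[OF weight_sc] by simp

lemma weight_H: "weight H 0"
  by (simp add: weight_def commutator_def)

lemma weight_hinv: "weight (hinv W k) 0"
proof -
  have "H * (H + of_int k) = (H + of_int k) * H"
    by (simp add: distrib_left distrib_right mult_of_int_commute[of k H])
  then show ?thesis
    by (simp add: weight_def commutator_def intertwine_hinv)
qed

lemma weight_mult_hinv: "weight u m \<Longrightarrow> u * hinv W k = hinv W (k + m) * u"
  by (rule intertwine_hinv)
    (simp add: weight_mult_H algebra_simps flip: mult_of_int_commute[of k u])

lemma commutator_H:
  "commutator u H = sc W (- (1/2)) * (\<Sum>l<n. commutator u (dv W l * xv W l + xv W l * dv W l))"
  by (simp add: Hop_def commutator_sc_right commutator_sum_right)

lemma weight_x: assumes j: "j < n" shows "weight (xv W j) 1"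
proof -
  have "commutator (xv W j) (dv W l * xv W l + xv W l * dv W l)
      = (if l = j then - (xv W j + xv W j) else 0)"
    if l: "l < n" for l
    using commutator_d_x[OF l j] x_commute[OF j l]
    unfolding commutator_eq_0_iff[symmetric]
    by (simp add: commutator_add_right commutator_mult_right
        commutator_antisym[of "xv W j" "dv W l"])
  then show ?thesis
    using j by (simp add: weight_def commutator_H sc_half_double del: minus_add_distrib)
qed

lemma weight_d: assumes j: "j < n" shows "weight (dv W j) (- 1)"
proof -
  have "commutator (dv W j) (dv W l * xv W l + xv W l * dv W l)
      = (if l = j then dv W j + dv W j else 0)"
    if l: "l < n" for l
    using commutator_d_x[OF j l] d_commute[OF j l]
    unfolding commutator_eq_0_iff[symmetric]
    by (simp add: commutator_add_right commutator_mult_right)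
  then show ?thesis
    using j by (simp add: weight_def commutator_H sc_half_double)
qed

lemma weight_g: assumes j: "j < n" shows "weight (gv W j) 0"
proof -
  have "commutator (gv W j) (dv W l * xv W l + xv W l * dv W l) = 0" if l: "l < n" for l
    using g_d_commute[OF j l] g_x_commute[OF j l]
    unfolding commutator_eq_0_iff[symmetric]
    by (simp add: commutator_add_right commutator_mult_right)
  then show ?thesis
    by (simp add: weight_def commutator_H)
qed

lemma weight_sc_lin_comb:
  assumes "\<And>l. l < n \<Longrightarrow> weight (f l) m"
  shows "weight (\<Sum>l<n. sc W (c l) * f l) m"
  using assms by (intro weight_sum weight_sc_mult) simp

lemma weight_xlow: "weight (xlow W i) 1"
  unfolding xlow_def by (simp add: weight_sc_lin_comb weight_x)

lemma weight_X: "weight X (- 1)"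
  unfolding Xop_eq
  by (intro weight_sc_mult weight_sum) (simp add: weight_mult[OF weight_g weight_d, simplified])

lemma weight_Y: "weight Y 1"
  unfolding Yop_eq
  by (intro weight_sc_mult weight_sum) (simp add: weight_mult[OF weight_g weight_xlow, simplified])

lemma weight_mult_kinv: "weight u m \<Longrightarrow> u * kinv W k t = kinv W k (t + m) * u"
  by (simp add: kinv_def weight_mult_hinv sc_commute[of _ u] algebra_simps)

lemma weight_mult_phiH: "weight u m \<Longrightarrow> u * phiH W k t = phiH W k (t + m) * u"
proof (induction k)
  case (Suc k)
  have "u * phiH W (Suc k) t = (u * phiH W k t) * sc W ((- 1) ^ Suc k) * kinv W (Suc k) t"
    by (simp add: mult.assoc)
  also have "\<dots> = phiH W k (t + m) * sc W ((- 1) ^ Suc k) * (u * kinv W (Suc k) t)"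
    by (simp add: Suc mult.assoc sc_left_commute[of u])
  also have "\<dots> = phiH W (Suc k) (t + m) * u"
    by (simp add: weight_mult_kinv[OF Suc.prems] mult.assoc)
  finally show ?case .
qed simp

lemma HRat_1: "1 \<in> HRat W"
  using HRat.hr_sc[of W 1] by (simp add: sc_1)

lemma kinv_HRat: "kinv W k t \<in> HRat W"
  by (simp add: kinv_def HRat.intros)

lemma phiH_HRat: "phiH W k t \<in> HRat W"
  by (induction k) (simp_all add: HRat_1 HRat.hr_mult HRat.hr_sc kinv_HRat)

lemma weight_HRat: "\<phi> \<in> HRat W \<Longrightarrow> weight \<phi> 0"
proof (induction rule: HRat.induct)
  case (hr_mult a b)
  then show ?case using weight_mult[of a 0 b 0] by simp
qed (simp_all add: weight_sc weight_H weight_hinv weight_add)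

lemma HRat_pass_left:
  assumes u: "weight u m" and \<phi>: "\<phi> \<in> HRat W"
  shows "\<exists>\<psi>\<in>HRat W. u * \<phi> = \<psi> * u"
  using \<phi>
proof (induction rule: HRat.induct)
  case hr_H
  have "u * H = (H + sc W (of_int m)) * u"
    using weight_mult_H[OF u] by (simp add: sc_of_int)
  then show ?case by (blast intro: HRat.intros)
next
  case (hr_hinv k)
  show ?case using weight_mult_hinv[OF u] by (blast intro: HRat.intros)
next
  case (hr_add a b)
  then obtain p q where "p \<in> HRat W" "q \<in> HRat W" "u * a = p * u" "u * b = q * u" by blast
  then show ?case by (intro bexI[of _ "p + q"]) (auto simp: algebra_simps intro: HRat.intros)
next
  case (hr_mult a b)
  then obtain p q where "p \<in> HRat W" "q \<in> HRat W" "u * a = p * u" "u * b = q * u" by blast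
  then have "u * (a * b) = p * q * u" by (metis mult.assoc)
  then show ?case using \<open>p \<in> HRat W\<close> \<open>q \<in> HRat W\<close> by (blast intro: HRat.intros)
qed (metis HRat.hr_sc sc_commute)

lemma HRat_pass_right:
  assumes u: "weight u m" and \<phi>: "\<phi> \<in> HRat W"
  shows "\<exists>\<psi>\<in>HRat W. \<phi> * u = u * \<psi>"
  using \<phi>
proof (induction rule: HRat.induct)
  case hr_H
  have "H * u = u * (H + sc W (- of_int m))"
    using weight_mult_H[OF u]
    by (simp add: sc_minus sc_of_int algebra_simps mult_of_int_commute[of m u])
  then show ?case by (blast intro: HRat.intros)
next
  case (hr_hinv k)
  have "hinv W k * u = u * hinv W (k - m)"
    using weight_mult_hinv[OF u, of "k - m"] by simp
  then show ?case by (blast intro: HRat.intros)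
next
  case (hr_add a b)
  then obtain p q where "p \<in> HRat W" "q \<in> HRat W" "a * u = u * p" "b * u = u * q" by blast
  then show ?case by (intro bexI[of _ "p + q"]) (auto simp: algebra_simps intro: HRat.intros)
next
  case (hr_mult a b)
  then obtain p q where "p \<in> HRat W" "q \<in> HRat W" "a * u = u * p" "b * u = u * q" by blast
  then have "a * b * u = u * (p * q)" by (metis mult.assoc)
  then show ?case using \<open>p \<in> HRat W\<close> \<open>q \<in> HRat W\<close> by (blast intro: HRat.intros)
qed (metis HRat.hr_sc sc_commute)

section \<open>The right ideal Y A' and the left ideal A' X\<close>

lemma Agen_0: "0 \<in> Agen W"
  using Agen.gen_sc[of W 0] by (simp add: sc_0)

lemma Agen_1: "1 \<in> Agen W"
  using Agen.gen_sc[of W 1] by (simp add: sc_1)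

lemma Agen_uminus: "a \<in> Agen W \<Longrightarrow> - a \<in> Agen W"
  using Agen.gen_mult[OF Agen.gen_sc[of W "- 1"]] by (simp add: sc_minus sc_1)

lemma Agen_diff: "a \<in> Agen W \<Longrightarrow> b \<in> Agen W \<Longrightarrow> a - b \<in> Agen W"
  using Agen.gen_add[OF _ Agen_uminus] by simp

lemma Agen_sum: "(\<And>l. l \<in> A \<Longrightarrow> f l \<in> Agen W) \<Longrightarrow> (\<Sum>l\<in>A. f l) \<in> Agen W"
  by (induction A rule: infinite_finite_induct) (simp_all add: Agen_0 Agen.gen_add)

lemma Agen_power: "a \<in> Agen W \<Longrightarrow> a ^ k \<in> Agen W"
  by (induction k) (simp_all add: Agen_1 Agen.gen_mult)

lemma Agen_sc_lin_comb:
  assumes "\<And>l. l < n \<Longrightarrow> f l \<in> Agen W"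
  shows "(\<Sum>l<n. sc W (c l) * f l) \<in> Agen W"
  using assms by (intro Agen_sum Agen.gen_mult Agen.gen_sc) simp

lemma Agen_xlow: "xlow W i \<in> Agen W"
  unfolding xlow_def by (intro Agen_sc_lin_comb Agen.gen_x)

lemma Agen_glow: "glow W i \<in> Agen W"
  unfolding glow_def by (intro Agen_sc_lin_comb Agen.gen_g)

lemma Agen_dup: "dup W i \<in> Agen W"
  unfolding dup_def by (intro Agen_sc_lin_comb Agen.gen_d)

lemma Agen_X: "X \<in> Agen W"
  unfolding Xop_eq by (intro Agen_sum Agen.gen_mult Agen.gen_sc Agen.gen_g Agen.gen_d) simp_all

lemma Agen_Y: "Y \<in> Agen W"
  unfolding Yop_eq by (intro Agen_sum Agen.gen_mult Agen.gen_sc Agen.gen_g Agen_xlow) simp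

lemma Agen_H: "H \<in> Agen W"
  unfolding Hop_def
  by (intro Agen_sum Agen.gen_mult Agen.gen_add Agen.gen_sc Agen.gen_x Agen.gen_d) simp_all

lemma HRat_Agen: "\<phi> \<in> HRat W \<Longrightarrow> \<phi> \<in> Agen W"
  by (induction rule: HRat.induct) (simp_all add: Agen.intros Agen_H)

definition Y_mults :: "'a set" where
  "Y_mults = (\<lambda>r. Y * r) ` Agen W"

definition X_mults :: "'a set" where
  "X_mults = (\<lambda>r. r * X) ` Agen W"

lemma Y_mults_I: "r \<in> Agen W \<Longrightarrow> Y * r \<in> Y_mults"
  by (simp add: Y_mults_def)

lemma X_mults_I: "r \<in> Agen W \<Longrightarrow> r * X \<in> X_mults"
  by (simp add: X_mults_def)

lemma Y_mults_Agen: "y \<in> Y_mults \<Longrightarrow> y \<in> Agen W"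
  by (auto simp: Y_mults_def intro: Agen.gen_mult Agen_Y)

lemma Y_mults_mult_right: "y \<in> Y_mults \<Longrightarrow> b \<in> Agen W \<Longrightarrow> y * b \<in> Y_mults"
  by (auto simp: Y_mults_def mult.assoc intro: Agen.gen_mult)

lemma X_mults_mult_left: "a \<in> Agen W \<Longrightarrow> x \<in> X_mults \<Longrightarrow> a * x \<in> X_mults"
  by (auto simp: X_mults_def mult.assoc[symmetric] intro: Agen.gen_mult)

lemma Y_mults_mult_left:
  assumes "a * Y = Y * a'" "a' \<in> Agen W" "y \<in> Y_mults"
  shows "a * y \<in> Y_mults"
proof -
  obtain r where "r \<in> Agen W" "y = Y * r"
    using assms(3) by (auto simp: Y_mults_def)
  then have "a * y = Y * (a' * r)"
    by (simp add: assms(1) flip: mult.assoc)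
  then show ?thesis
    using \<open>r \<in> Agen W\<close> assms(2) by (simp add: Y_mults_I Agen.gen_mult)
qed

lemma HRat_mult_Y_mults: "\<phi> \<in> HRat W \<Longrightarrow> y \<in> Y_mults \<Longrightarrow> \<phi> * y \<in> Y_mults"
  using HRat_pass_right[OF weight_Y] by (metis HRat_Agen Y_mults_mult_left)

lemma Y_mults_0: "0 \<in> Y_mults"
  using Y_mults_I[OF Agen_0] by simp

lemma X_mults_0: "0 \<in> X_mults"
  using X_mults_I[OF Agen_0] by simp

lemma Y_mults_power_mono:
  assumes "a * Y ^ k \<in> Y_mults" "k \<le> l"
  shows "a * Y ^ l \<in> Y_mults"
proof -
  have "a * Y ^ l = a * Y ^ k * Y ^ (l - k)"
    using assms(2) by (simp add: mult.assoc flip: power_add)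
  then show ?thesis
    using assms(1) by (simp add: Y_mults_mult_right Agen_power Agen_Y)
qed

lemma X_mults_power_mono:
  assumes "X ^ k * b \<in> X_mults" "k \<le> l"
  shows "X ^ l * b \<in> X_mults"
proof -
  have "X ^ l * b = X ^ (l - k) * (X ^ k * b)"
    using assms(2) by (simp add: mult.assoc[symmetric] flip: power_add)
  then show ?thesis
    using assms(1) by (simp add: X_mults_mult_left Agen_power Agen_X)
qed

lemma II_0: "0 \<in> II W"
  unfolding II_def using Agen_0 by force

lemma II_add: "u \<in> II W \<Longrightarrow> v \<in> II W \<Longrightarrow> u + v \<in> II W"
proof -
  assume "u \<in> II W" "v \<in> II W"
  then obtain a1 a2 a3 a4 b1 b2 b3 b4 where
    "u = Y * a1 + Fop W * a2 + a3 * X + a4 * Eop W"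
    "v = Y * b1 + Fop W * b2 + b3 * X + b4 * Eop W" and
    "a1 \<in> Agen W" "a2 \<in> Agen W" "a3 \<in> Agen W" "a4 \<in> Agen W"
    "b1 \<in> Agen W" "b2 \<in> Agen W" "b3 \<in> Agen W" "b4 \<in> Agen W"
    unfolding II_def by blast
  moreover from this(1,2)
  have "u + v = Y * (a1 + b1) + Fop W * (a2 + b2) + (a3 + b3) * X + (a4 + b4) * Eop W"
    by (simp add: algebra_simps)
  ultimately show ?thesis
    unfolding II_def by (blast intro: Agen.gen_add)
qed

lemma II_sum: "(\<And>k. k \<in> A \<Longrightarrow> f k \<in> II W) \<Longrightarrow> (\<Sum>k\<in>A. f k) \<in> II W"
  by (induction A rule: infinite_finite_induct) (simp_all add: II_0 II_add)

lemma Y_mults_add_X_mults_II: "y \<in> Y_mults \<Longrightarrow> x \<in> X_mults \<Longrightarrow> y + x \<in> II W"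
  unfolding II_def Y_mults_def X_mults_def using Agen_0 by force

lemma X_mults_II: "x \<in> X_mults \<Longrightarrow> x \<in> II W"
  using Y_mults_add_X_mults_II[OF Y_mults_I[OF Agen_0]] by simp

lemma commute_sc_lin_comb:
  assumes "\<And>l. l < n \<Longrightarrow> f l * b = b * f l"
  shows "(\<Sum>l<n. sc W (c l) * f l) * b = b * (\<Sum>l<n. sc W (c l) * f l)"
proof -
  have "(\<Sum>l<n. sc W (c l) * f l) * b = (\<Sum>l<n. sc W (c l) * (f l * b))"
    by (simp add: sum_distrib_right mult.assoc)
  also have "\<dots> = (\<Sum>l<n. sc W (c l) * (b * f l))"
    using assms by (intro sum.cong) simp_all
  also have "\<dots> = b * (\<Sum>l<n. sc W (c l) * f l)"
    by (simp add: sum_distrib_left sc_left_commute)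
  finally show ?thesis .
qed

lemma X_d_commute: assumes j: "j < n" shows "X * dv W j = dv W j * X"
proof -
  have "(gv W l * dv W l) * dv W j = dv W j * (gv W l * dv W l)" if l: "l < n" for l
    using g_d_commute[OF l j] d_commute[OF l j] by (metis mult.assoc)
  then have "(\<Sum>l<n. sc W i_sqrt_half * (gv W l * dv W l)) * dv W j
      = dv W j * (\<Sum>l<n. sc W i_sqrt_half * (gv W l * dv W l))"
    by (rule commute_sc_lin_comb)
  then show ?thesis
    by (simp add: Xop_eq sum_distrib_left)
qed

lemma X_dup_commute: "X * dup W j = dup W j * X"
  unfolding dup_def by (rule commute_sc_lin_comb[symmetric]) (simp add: X_d_commute)

lemma g_xlow_commute: "j < n \<Longrightarrow> gv W j * xlow W l = xlow W l * gv W j"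
  unfolding xlow_def by (rule commute_sc_lin_comb[symmetric]) (simp add: g_x_commute)

lemma x_Y_commute: assumes j: "j < n" shows "xv W j * Y = Y * xv W j"
proof -
  have "xv W j * xlow W l = xlow W l * xv W j" for l
    unfolding xlow_def by (rule commute_sc_lin_comb[symmetric]) (simp add: x_commute j)
  then have "(gv W l * xlow W l) * xv W j = xv W j * (gv W l * xlow W l)" if l: "l < n" for l
    using g_x_commute[OF l j] by (metis mult.assoc)
  then have "(\<Sum>l<n. sc W i_sqrt_half * (gv W l * xlow W l)) * xv W j
      = xv W j * (\<Sum>l<n. sc W i_sqrt_half * (gv W l * xlow W l))"
    by (rule commute_sc_lin_comb)
  then show ?thesis
    by (simp add: Yop_eq sum_distrib_left)
qed

lemma xlow_Y_commute: "xlow W i * Y = Y * xlow W i"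
  unfolding xlow_def by (rule commute_sc_lin_comb) (simp add: x_Y_commute)

lemma X_mult_g:
  assumes j: "j < n"
  shows "X * gv W j = sc W (2 * i_sqrt_half) * dup W j - gv W j * X"
proof -
  have summand:
    "gv W l * dv W l * gv W j = sc W (2 * eta W j l) * dv W l - gv W j * (gv W l * dv W l)"
    if l: "l < n" for l
  proof -
    have "gv W l * dv W l * gv W j = (gv W l * gv W j) * dv W l"
      by (simp add: mult.assoc flip: g_d_commute[OF j l])
    also have "\<dots> = (sc W (2 * eta W l j) - gv W j * gv W l) * dv W l"
      by (simp only: g_anticommute[OF l j])
    finally show ?thesis
      using eta_sym l j by (simp add: left_diff_distrib mult.assoc)
  qed
  have "X * gv W j = sc W i_sqrt_half * (\<Sum>l<n. gv W l * dv W l * gv W j)"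
    by (simp add: Xop_eq sum_distrib_right mult.assoc)
  also have "\<dots> = sc W i_sqrt_half * ((\<Sum>l<n. sc W (2 * eta W j l) * dv W l)
      - gv W j * (\<Sum>l<n. gv W l * dv W l))"
    by (simp add: summand sum_subtractf sum_distrib_left)
  also have "\<dots> = sc W i_sqrt_half * (sc W 2 * dup W j - gv W j * (\<Sum>l<n. gv W l * dv W l))"
    by (simp add: dup_def sc_mult sum_distrib_left mult.assoc)
  also have "\<dots> = sc W (2 * i_sqrt_half) * dup W j - gv W j * X"
    by (simp add: Xop_eq right_diff_distrib sc_sc_mult sc_left_commute[of "gv W j"] mult.commute)
  finally show ?thesis .
qed

lemma X_mult_x: assumes j: "j < n" shows "X * xv W j = xv W j * X + sc W i_sqrt_half * gv W j"
proof -
  have summand: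
    "gv W l * dv W l * xv W j = xv W j * (gv W l * dv W l) + (if l = j then gv W l else 0)"
    if l: "l < n" for l
  proof -
    have "gv W l * dv W l * xv W j = gv W l * (xv W j * dv W l + commutator (dv W l) (xv W j))"
      by (simp add: commutator_def mult.assoc)
    then show ?thesis
      by (simp add: commutator_d_x[OF l j] distrib_left g_x_commute[OF l j] flip: mult.assoc)
  qed
  have "X * xv W j = sc W i_sqrt_half * (\<Sum>l<n. gv W l * dv W l * xv W j)"
    by (simp add: Xop_eq sum_distrib_right mult.assoc)
  also have "\<dots> = sc W i_sqrt_half * (xv W j * (\<Sum>l<n. gv W l * dv W l) + gv W j)"
    using j by (simp add: summand sum.distrib sum_distrib_left)
  also have "\<dots> = xv W j * X + sc W i_sqrt_half * gv W j"
    by (simp add: Xop_eq distrib_left sc_left_commute[of "xv W j"])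
  finally show ?thesis .
qed

lemma g_mult_Y: assumes i: "i < n" shows "gv W i * Y = sc W (2 * i_sqrt_half) * xv W i - Y * gv W i"
proof -
  have summand: "gv W i * (gv W l * xlow W l)
      = sc W (2 * eta W i l) * xlow W l - gv W l * xlow W l * gv W i"
    if l: "l < n" for l
  proof -
    have "gv W i * (gv W l * xlow W l) = (sc W (2 * eta W i l) - gv W l * gv W i) * xlow W l"
      by (simp only: g_anticommute[OF i l] mult.assoc[symmetric])
    then show ?thesis
      by (simp add: left_diff_distrib mult.assoc g_xlow_commute[OF i])
  qed
  have "gv W i * Y = sc W i_sqrt_half * (\<Sum>l<n. gv W i * (gv W l * xlow W l))"
    by (simp add: Yop_eq sc_left_commute[of "gv W i"] sum_distrib_left)
  also have "\<dots> = sc W i_sqrt_half * ((\<Sum>l<n. sc W (2 * eta W i l) * xlow W l)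
      - (\<Sum>l<n. gv W l * xlow W l) * gv W i)"
    by (simp add: summand sum_subtractf sum_distrib_right)
  also have "\<dots> = sc W i_sqrt_half * (sc W 2 * xv W i - (\<Sum>l<n. gv W l * xlow W l) * gv W i)"
    using sum_eta_xlow[OF i] by (simp add: sc_mult mult.assoc flip: sum_distrib_left)
  also have "\<dots> = sc W (2 * i_sqrt_half) * xv W i - Y * gv W i"
    by (simp add: Yop_eq right_diff_distrib sc_sc_mult mult.commute mult.assoc)
  finally show ?thesis .
qed

lemma d_mult_Y: assumes i: "i < n" shows "dv W i * Y = Y * dv W i + sc W i_sqrt_half * glow W i"
proof -
  have d_xlow: "dv W i * xlow W l = xlow W l * dv W i + sc W (etai W l i)" for l
  proof -
    have "dv W i * xlow W l
        = (\<Sum>m<n. sc W (etai W l m) * (xv W m * dv W i + commutator (dv W i) (xv W m)))"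
      by (simp add: xlow_def sum_distrib_left sc_left_commute[of "dv W i"] commutator_def)
    also have "\<dots> = xlow W l * dv W i + sc W (etai W l i)"
      using i by (simp add: commutator_d_x distrib_left sum.distrib xlow_def sum_distrib_right
          mult.assoc if_distrib[of "\<lambda>x. sc W _ * x"] cong: if_cong)
    finally show ?thesis .
  qed
  have summand: "dv W i * (gv W l * xlow W l)
      = gv W l * xlow W l * dv W i + sc W (etai W i l) * gv W l"
    if l: "l < n" for l
  proof -
    have "dv W i * (gv W l * xlow W l) = gv W l * (dv W i * xlow W l)"
      by (simp only: g_d_commute[OF l i] mult.assoc[symmetric])
    then show ?thesis
      by (simp add: d_xlow distrib_left mult.assoc etai_sym[OF i l] sc_commute[of _ "gv W l"])
  qed
  have "dv W i * Y = sc W i_sqrt_half * (\<Sum>l<n. dv W i * (gv W l * xlow W l))"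
    by (simp add: Yop_eq sc_left_commute[of "dv W i"] sum_distrib_left)
  also have "\<dots> = sc W i_sqrt_half * ((\<Sum>l<n. gv W l * xlow W l) * dv W i + glow W i)"
    by (simp add: summand sum.distrib sum_distrib_right glow_def)
  also have "\<dots> = Y * dv W i + sc W i_sqrt_half * glow W i"
    by (simp add: Yop_eq distrib_left mult.assoc)
  finally show ?thesis .
qed

lemma glow_mult_Y: "glow W i * Y = sc W (2 * i_sqrt_half) * xlow W i - Y * glow W i"
proof -
  have "glow W i * Y = (\<Sum>l<n. sc W (etai W i l) * (gv W l * Y))"
    by (simp add: glow_def sum_distrib_right mult.assoc)
  also have "\<dots> = (\<Sum>l<n. sc W (2 * i_sqrt_half) * (sc W (etai W i l) * xv W l)
      - Y * (sc W (etai W i l) * gv W l))"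
    by (intro sum.cong)
      (simp_all add: g_mult_Y right_diff_distrib sc_sc_mult sc_left_commute[of Y] mult.commute)
  also have "\<dots> = sc W (2 * i_sqrt_half) * xlow W i - Y * glow W i"
    by (simp add: sum_subtractf sum_distrib_left xlow_def glow_def)
  finally show ?thesis .
qed

section \<open>Diamond products\<close>

lemma g_Y_power_residue:
  assumes i: "i < n"
  shows "gv W i * Y ^ k
    - (if k = 0 then gv W i else if k = 1 then sc W (2 * i_sqrt_half) * xv W i else 0) \<in> Y_mults"
proof -
  have "gv W i * Y ^ 2 = (gv W i * Y) * Y"
    by (simp add: power2_eq_square mult.assoc)
  also have "\<dots> = Y * (sc W (2 * i_sqrt_half) * xv W i - gv W i * Y)"
    by (simp add: g_mult_Y[OF i] left_diff_distrib right_diff_distrib mult.assoc x_Y_commute[OF i]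
        sc_left_commute[of Y])
  finally have "gv W i * Y ^ 2 \<in> Y_mults"
    using i by (simp add: Y_mults_I Agen_diff Agen.intros Agen_Y)
  moreover have "gv W i * Y - sc W (2 * i_sqrt_half) * xv W i \<in> Y_mults"
    using Y_mults_I[of "- gv W i"] i by (simp add: g_mult_Y[OF i] Agen_uminus Agen.gen_g)
  moreover consider "k = 0" | "k = 1" | "2 \<le> k"
    by linarith
  ultimately show ?thesis
    by cases (simp_all add: Y_mults_0 Y_mults_power_mono)
qed

lemma d_Y_power_residue:
  assumes i: "i < n"
  shows "dv W i * Y ^ k - (if k = 0 then dv W i else if k = 1 then sc W i_sqrt_half * glow W i
    else if k = 2 then - xlow W i else 0) \<in> Y_mults"
proof -
  define p where "p = dv W i * Y - sc W i_sqrt_half * glow W i"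
  have p: "p \<in> Agen W"
    using i by (simp add: p_def Agen_diff Agen.intros Agen_Y Agen_glow)
  have "dv W i * Y ^ 2 = (Y * dv W i + sc W i_sqrt_half * glow W i) * Y"
    by (simp add: power2_eq_square d_mult_Y[OF i] flip: mult.assoc)
  also have "\<dots> = Y * p - xlow W i"
    by (simp add: p_def glow_mult_Y distrib_right right_diff_distrib mult.assoc
        sc_left_commute[of Y] sc_sc_mult i_sqrt_half_products sc_minus sc_1)
  finally have Y2: "dv W i * Y ^ 2 = Y * p - xlow W i" .
  have "dv W i * Y ^ 3 = (dv W i * Y ^ 2) * Y"
    by (simp add: power3_eq_cube power2_eq_square mult.assoc)
  also have "\<dots> = Y * (p * Y - xlow W i)"
    by (simp add: Y2 left_diff_distrib right_diff_distrib xlow_Y_commute mult.assoc)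
  finally have "dv W i * Y ^ 3 = Y * (p * Y - xlow W i)" .
  then have "dv W i * Y ^ 3 \<in> Y_mults"
    using p by (simp add: Y_mults_I Agen_diff Agen.gen_mult Agen_Y Agen_xlow)
  moreover have "dv W i * Y - sc W i_sqrt_half * glow W i \<in> Y_mults"
    using Y_mults_I[of "dv W i"] i by (simp add: d_mult_Y[OF i] Agen.gen_d)
  moreover have "dv W i * Y ^ 2 + xlow W i \<in> Y_mults"
    using Y_mults_I[OF p] by (simp add: Y2)
  moreover consider "k = 0" | "k = 1" | "k = 2" | "3 \<le> k"
    by linarith
  ultimately show ?thesis
    by cases (simp_all add: Y_mults_0 Y_mults_power_mono)
qed

lemma X_power_g_residue:
  assumes j: "j < n"
  shows "X ^ k * gv W j
    - (if k = 0 then gv W j else if k = 1 then sc W (2 * i_sqrt_half) * dup W j else 0) \<in> X_mults"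
proof -
  have "X ^ 2 * gv W j = X * (sc W (2 * i_sqrt_half) * dup W j - gv W j * X)"
    by (simp add: power2_eq_square mult.assoc X_mult_g[OF j])
  also have "\<dots> = (sc W (2 * i_sqrt_half) * dup W j - X * gv W j) * X"
    by (simp add: right_diff_distrib left_diff_distrib sc_left_commute[of X] X_dup_commute
        mult.assoc)
  finally have "X ^ 2 * gv W j \<in> X_mults"
    using j by (simp add: X_mults_I Agen_diff Agen.intros Agen_X Agen_dup)
  moreover have "X * gv W j - sc W (2 * i_sqrt_half) * dup W j \<in> X_mults"
    using X_mults_I[of "- gv W j"] j by (simp add: X_mult_g[OF j] Agen_uminus Agen.gen_g)
  moreover consider "k = 0" | "k = 1" | "2 \<le> k"
    by linarith
  ultimately show ?thesis
    by cases (simp_all add: X_mults_0 X_mults_power_mono)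
qed

lemma X_power_x_residue:
  assumes j: "j < n"
  shows "X ^ k * xv W j - (if k = 0 then xv W j else if k = 1 then sc W i_sqrt_half * gv W j
    else if k = 2 then - dup W j else 0) \<in> X_mults"
proof -
  define r where "r = X * xv W j - sc W i_sqrt_half * gv W j"
  have r: "r \<in> Agen W"
    using j by (simp add: r_def Agen_diff Agen.intros Agen_X)
  have "X ^ 2 * xv W j = X * (xv W j * X + sc W i_sqrt_half * gv W j)"
    by (simp add: power2_eq_square mult.assoc X_mult_x[OF j])
  also have "\<dots> = r * X - dup W j"
    by (simp add: r_def X_mult_g[OF j] distrib_left left_diff_distrib right_diff_distrib
        sc_left_commute[of X] sc_sc_mult i_sqrt_half_products sc_minus sc_1 mult.assoc)
  finally have X2: "X ^ 2 * xv W j = r * X - dup W j" .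
  have "X ^ 3 * xv W j = X * (X ^ 2 * xv W j)"
    by (simp add: power3_eq_cube power2_eq_square mult.assoc)
  also have "\<dots> = (X * r - dup W j) * X"
    by (simp add: X2 left_diff_distrib right_diff_distrib X_dup_commute mult.assoc)
  finally have "X ^ 3 * xv W j = (X * r - dup W j) * X" .
  then have "X ^ 3 * xv W j \<in> X_mults"
    using r by (simp add: X_mults_I Agen_diff Agen.gen_mult Agen_X Agen_dup)
  moreover have "X * xv W j - sc W i_sqrt_half * gv W j \<in> X_mults"
    using X_mults_I[of "xv W j"] j by (simp add: X_mult_x[OF j] Agen.gen_x)
  moreover have "X ^ 2 * xv W j + dup W j \<in> X_mults"
    using X_mults_I[OF r] by (simp add: X2)
  moreover consider "k = 0" | "k = 1" | "k = 2" | "3 \<le> k"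
    by linarith
  ultimately show ?thesis
    by cases (simp_all add: X_mults_0 X_mults_power_mono)
qed

lemma dsummand_residue:
  assumes "weight a m" "a \<in> Agen W" "b \<in> Agen W"
    and "a * Y ^ k - q \<in> Y_mults" "X ^ k * b - t \<in> X_mults"
  shows "dsummand W a b k - phiH W k m * q * t \<in> II W"
proof -
  define y x where "y = a * Y ^ k - q" and "x = X ^ k * b - t"
  have "dsummand W a b k = phiH W k m * (a * Y ^ k) * (X ^ k * b)"
    using weight_mult_phiH[OF assms(1), of k 0] by (simp add: dsummand_def mult.assoc)
  then have "dsummand W a b k - phiH W k m * q * t
      = (phiH W k m * y) * (X ^ k * b) + (phiH W k m * q) * x"
    by (simp add: x_def y_def algebra_simps)
  moreover have "(phiH W k m * y) * (X ^ k * b) \<in> Y_mults"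
    using assms by (simp add: y_def HRat_mult_Y_mults phiH_HRat Y_mults_mult_right
        Agen.gen_mult Agen_power Agen_X)
  moreover have "a * Y ^ k \<in> Agen W"
    using assms(2) by (simp add: Agen.gen_mult Agen_power Agen_Y)
  then have "q \<in> Agen W"
    using Agen_diff[OF _ Y_mults_Agen[OF assms(4)], of "a * Y ^ k"] by simp
  then have "(phiH W k m * q) * x \<in> X_mults"
    using assms by (simp add: x_def X_mults_mult_left Agen.gen_mult HRat_Agen phiH_HRat)
  ultimately show ?thesis
    by (simp add: Y_mults_add_X_mults_II)
qed

lemma diamond_eqI:
  assumes "\<And>k. N \<le> k \<Longrightarrow> dsummand W a b k \<in> II W"
    and "\<And>k. k < N \<Longrightarrow> dsummand W a b k - c k \<in> II W"
  shows "diamond_eq W a b (\<Sum>k<N. c k)"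
  unfolding diamond_eq_def
proof (intro exI conjI allI impI)
  have "(\<Sum>k<N. dsummand W a b k - c k) \<in> II W"
    using assms(2) by (intro II_sum) simp
  then show "(\<Sum>k<N. dsummand W a b k) - (\<Sum>k<N. c k) \<in> II W"
    by (simp add: sum_subtractf)
qed (use assms(1) in simp)

lemma diamond_eq_residues:
  assumes "weight a m" "a \<in> Agen W" "b \<in> Agen W"
    and "\<And>k. a * Y ^ k - q k \<in> Y_mults" "\<And>k. X ^ k * b - t k \<in> X_mults"
    and "\<And>k. N \<le> k \<Longrightarrow> q k * t k = 0"
  shows "diamond_eq W a b (\<Sum>k<N. phiH W k m * q k * t k)"
proof (rule diamond_eqI)
  fix k
  show "dsummand W a b k - phiH W k m * q k * t k \<in> II W"
    by (rule dsummand_residue[OF assms(1-5)])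
  moreover assume "N \<le> k"
  ultimately show "dsummand W a b k \<in> II W"
    using assms(6) by (simp add: mult.assoc)
qed

lemma diamond_eq_mult_of_Y_mults:
  assumes "weight a m" "a \<in> Agen W" "b \<in> Agen W" "a * Y \<in> Y_mults"
  shows "diamond_eq W a b (a * b)"
proof -
  have "a * Y ^ k - (if k = 0 then a else 0) \<in> Y_mults" for k
    using Y_mults_power_mono[of a 1 k] assms(4) by (simp add: Y_mults_0)
  then have "diamond_eq W a b (\<Sum>k<1. phiH W k m * (if k = 0 then a else 0) * (X ^ k * b))"
    using assms(1-3) X_mults_0 by (intro diamond_eq_residues) simp_all
  then show ?thesis
    by simp
qed

lemma diamond_eq_mult_of_X_mults:
  assumes "a \<in> Agen W" "b \<in> Agen W" "X * b \<in> X_mults"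
  shows "diamond_eq W a b (a * b)"
proof -
  have "dsummand W a b k \<in> II W" if "1 \<le> k" for k
  proof -
    have "dsummand W a b k = (a * phiH W k 0 * Y ^ k) * (X ^ k * b)"
      by (simp add: dsummand_def mult.assoc)
    then show ?thesis
      using X_mults_power_mono[OF _ that, of b] assms
      by (simp add: X_mults_II X_mults_mult_left Agen.gen_mult Agen_power Agen_Y
          HRat_Agen phiH_HRat)
  qed
  then have "diamond_eq W a b (\<Sum>k<(1::nat). a * b)"
    by (intro diamond_eqI[where c = "\<lambda>_. a * b"]) (simp_all add: dsummand_def II_0)
  then show ?thesis
    by simp
qed

lemma diamond_d:
  "a \<in> Agen W \<Longrightarrow> j < n \<Longrightarrow> diamond_eq W a (dv W j) (a * dv W j)"
  by (rule diamond_eq_mult_of_X_mults) (simp_all add: X_d_commute X_mults_I Agen.gen_d)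

lemma x_diamond:
  "a \<in> Agen W \<Longrightarrow> i < n \<Longrightarrow> diamond_eq W (xv W i) a (xv W i * a)"
  by (rule diamond_eq_mult_of_Y_mults[OF weight_x]) (simp_all add: x_Y_commute Y_mults_I Agen.gen_x)

lemma HRat_diamond:
  assumes "\<phi> \<in> HRat W" "a \<in> Agen W"
  shows "diamond_eq W \<phi> a (\<phi> * a)"
proof (rule diamond_eq_mult_of_Y_mults[OF weight_HRat])
  show "\<phi> * Y \<in> Y_mults"
    using HRat_mult_Y_mults[OF assms(1) Y_mults_I[OF Agen_1]] by simp
qed (use assms HRat_Agen in auto)

lemma diamond_HRat:
  assumes "a \<in> Agen W" "\<phi> \<in> HRat W"
  shows "diamond_eq W a \<phi> (a * \<phi>)"
proof (rule diamond_eq_mult_of_X_mults)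
  obtain \<psi> where "\<psi> \<in> HRat W" "X * \<phi> = \<psi> * X"
    using HRat_pass_left[OF weight_X assms(2)] by blast
  then show "X * \<phi> \<in> X_mults"
    by (simp add: X_mults_I HRat_Agen)
qed (use assms HRat_Agen in auto)

lemma d_diamond_g:
  assumes "i < n" "j < n"
  shows "diamond_eq W (dv W i) (gv W j) (dv W i * gv W j - phiH W 1 (- 1) * glow W i * dup W j)"
  using diamond_eq_residues[OF weight_d Agen.gen_d Agen.gen_g d_Y_power_residue X_power_g_residue,
      of i j 2] assms
  by (simp add: numeral_2_eq_2 mult_sc_mult_sc i_sqrt_half_products sc_minus sc_1
      del: phiH.simps(2))

lemma g_diamond_g:
  assumes "i < n" "j < n"
  shows "diamond_eq W (gv W i) (gv W j) (gv W i * gv W j - sc W 2 * phiH W 1 0 * xv W i * dup W j)"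
  using diamond_eq_residues[OF weight_g Agen.gen_g Agen.gen_g g_Y_power_residue X_power_g_residue,
      of i j 2] assms
  by (simp add: numeral_2_eq_2 mult_sc_mult_sc i_sqrt_half_products sc_minus del: phiH.simps(2))

lemma d_diamond_x:
  assumes "i < n" "j < n"
  shows "diamond_eq W (dv W i) (xv W j) (dv W i * xv W j
    - sc W (1/2) * phiH W 1 (- 1) * glow W i * gv W j + phiH W 2 (- 1) * xlow W i * dup W j)"
  using diamond_eq_residues[OF weight_d Agen.gen_d Agen.gen_x d_Y_power_residue X_power_x_residue,
      of i j 3] assms
  by (simp add: numeral_3_eq_3 numeral_2_eq_2 mult_sc_mult_sc i_sqrt_half_squared sc_minus
      del: phiH.simps(2))

lemma g_diamond_x:
  assumes "i < n" "j < n"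
  shows "diamond_eq W (gv W i) (xv W j) (gv W i * xv W j - phiH W 1 0 * xv W i * gv W j)"
  using diamond_eq_residues[OF weight_g Agen.gen_g Agen.gen_x g_Y_power_residue X_power_x_residue,
      of i j 2] assms
  by (simp add: numeral_2_eq_2 mult_sc_mult_sc i_sqrt_half_products sc_minus sc_1
      del: phiH.simps(2))

end

theorem proposition4p1:
  fixes W :: "('a::ring_1, 'b) WC_scheme"
  assumes n1: "dim W \<ge> 1"
    and eta_sym: "\<forall>i<dim W. \<forall>j<dim W. eta W i j = eta W j i"
    and eta_inv1: "\<forall>i<dim W. \<forall>k<dim W. (\<Sum>j<dim W. eta W i j * etai W j k) = (if i = k then 1 else 0)"
    and eta_inv2: "\<forall>i<dim W. \<forall>k<dim W. (\<Sum>j<dim W. etai W i j * eta W j k) = (if i = k then 1 else 0)"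
    and alg: "WC_alg W"
  shows "\<forall>a\<in>Agen W. \<forall>i<dim W. \<forall>j<dim W. \<forall>\<phi>\<in>HRat W.
     diamond_eq W a (dv W j) (a * dv W j) \<and>
     diamond_eq W (xv W i) a (xv W i * a) \<and>
     diamond_eq W (dv W i) (gv W j)
        (dv W i * gv W j - phiH W 1 (-1) * glow W i * dup W j) \<and>
     diamond_eq W (gv W i) (gv W j)
        (gv W i * gv W j - sc W 2 * phiH W 1 0 * xv W i * dup W j) \<and>
     diamond_eq W (dv W i) (xv W j)
        (dv W i * xv W j - sc W (1/2) * phiH W 1 (-1) * glow W i * gv W j
           + phiH W 2 (-1) * xlow W i * dup W j) \<and>
     diamond_eq W (gv W i) (xv W j)
        (gv W i * xv W j - phiH W 1 0 * xv W i * gv W j) \<and>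
     diamond_eq W \<phi> a (\<phi> * a) \<and>
     diamond_eq W a \<phi> (a * \<phi>)"
proof -
  interpret weyl_clifford W
    using eta_sym eta_inv1 alg by unfold_locales
  show ?thesis
    by (blast intro: diamond_d x_diamond d_diamond_g g_diamond_g
        d_diamond_x g_diamond_x HRat_diamond diamond_HRat)
qed

end
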